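(* Every CQAP $Q\in\mathrm{CQAP}_0$ with at least one variable has dynamic width $\delta(Q)=0$ and static width $\mathsf w(Q)=1$.
   Context: CQAP. A conjunctive query with free access patterns (CQAP) has the form $Q(\mathcal O\mid\mathcal I)=R_1(\mathcal X_1),\dots,R_n(\mathcal X_n)$, where $R_i(\mathcal X_i)$ are atoms, $\mathit{vars}(Q)=\bigcup_i\mathcal X_i$, and the free variables $\mathcal O\cup\mathcal I\subseteq\mathit{vars}(Q)$ are partitioned into input variables $\mathcal I$ and output variables $\mathcal O$ (either may be empty); the other variables are bound. $\mathit{atoms}(X)$ denotes the set of atoms whose schema contains $X$. Fracture. The fracture $Q_\dagger$ of $Q$ is obtained by: replacing every occurrence of an input variable in every atom by a distinct fresh variable; computing the connected components of the hypergraph of the resulting query (vertices = variables, hyperedges = atom schemas); within each connected component, replacing all fresh variables originating from the same input variable of $Q$ by one fresh input variable. Output and bound variables are unchanged. Structural classes. $B$ dominates $A$ if $\mathit{atoms}(A)\subsetneq\mathit{atoms}(B)$. A CQAP is free-dominant (input-dominant) if whenever $A$ is free (input) and $B$ dominates $A$, then $B$ is free (input). It is hierarchical if for all variables $A,B$: $\mathit{atoms}(A)\subseteq\mathit{atoms}(B)$, or $\mathit{atoms}(B)\subseteq\mathit{atoms}(A)$, or $\mathit{atoms}(A)\cap\mathit{atoms}(B)=\emptyset$. $\mathrm{CQAP}_0$ is the class of CQAPs whose fracture is hierarchical, free-dominant and input-dominant. Variable orders. A variable order (VO) $\omega$ for a CQAP is a rooted forest with exactly one node per variable such that the variables of each atom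 lie on a common root-to-leaf path; $\mathit{dep}_\omega(X)$ is the set of ancestors $Y$ of $X$ that occur in a common atom with some variable of the subtree rooted at $X$. The extended VO adds leaves: each atom becomes a child of its lowest variable; then, processing variables bottom-up, at each variable $X$ with $\mathcal S=\{X\}\cup\mathit{dep}_\omega(X)$ and $\mathcal R$ the set of atoms below $X$, consider candidate indicator atoms $I_{\mathcal Z}R(\mathcal Z)$ for atoms $R(\mathcal Y)$ not in $\mathcal R$ with $\mathcal Z=\mathcal Y\cap\mathcal S\neq\emptyset$; run the GYO reduction (repeatedly delete a vertex occurring in only one hyperedge and a hyperedge contained in another) on the hypergraph whose hyperedges are the schemas of the candidates and of $\mathcal R$, and add as children of $X$ those candidates whose hyperedges survive in the fixpoint. All VOs are extended. A VO is access-top if no bound variable is an ancestor of a free variable and no output variable is an ancestor of an input variable. Widths. For a VO $\omega$ and variable $X$, $\omega_X$ is the subtree rooted at $X$ and $Q_X$ the join of all atoms and indicator atoms at the leaves of $\omega_X$. For a variable set $\mathcal F$, $\rho^*_{Q_X}(\mathcal F)$ is the minimum of $\sum_e\lambda_e$ over $\lambda_e\in[0,1]$ indexed by atoms $e$ of $Q_X$ subject to $\sum_{e\ni Y}\lambda_e\ge1$ for all $Y\in\mathcal F$ (so $\rho^*(\emptyset)=0$). $\mathsf w(\omega)=\max_X\rho^*_{Q_X}(\{X\}\cup\mathit{dep}_\omega(X))$ and $\delta(\omega)=\max_X\max_{R(\mathcal Y)}\rho^*_{Q_X}((\{X\}\cup\mathit{dep}_\omega(X))\setminus\mathcal Y)$,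 the inner maximum over atoms and indicator atoms $R(\mathcal Y)$ at leaves of $\omega_X$. For a CQAP $Q$, $(\delta(Q),\mathsf w(Q))$ is the lexicographically smallest pair $(\delta(\omega),\mathsf w(\omega))$ (first minimise $\delta$, then $\mathsf w$) over all access-top VOs $\omega$ of $Q_\dagger$. *)

theory Defs
  imports Complex_Main
begin

text \<open>A CQAP is given by the list of its atoms (each atom represented by its schema,
  the finite set of variables it contains; relation symbols play no role in any notion
  used here), its input variables and its output variables.\<close>

record 'v cqap =
  atoms :: "'v set list"
  inp   :: "'v set"
  outp  :: "'v set"

definition qvars :: "'v cqap \<Rightarrow> 'v set" where
  "qvars Q = \<Union> (set (atoms Q))"

definition free_vars :: "'v cqap \<Rightarrow> 'v set" where
  "free_vars Q = inp Q \<union> outp Q"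

definition bound_vars :: "'v cqap \<Rightarrow> 'v set" where
  "bound_vars Q = qvars Q - free_vars Q"

definition wf_cqap :: "'v cqap \<Rightarrow> bool" where
  "wf_cqap Q \<longleftrightarrow> (\<forall>X \<in> set (atoms Q). finite X)
      \<and> inp Q \<union> outp Q \<subseteq> qvars Q \<and> inp Q \<inter> outp Q = {}"

definition atoms_of :: "'v cqap \<Rightarrow> 'v \<Rightarrow> nat set" where
  "atoms_of Q A = {i. i < length (atoms Q) \<and> A \<in> atoms Q ! i}"

definition dominates :: "'v cqap \<Rightarrow> 'v \<Rightarrow> 'v \<Rightarrow> bool" where
  "dominates Q B A \<longleftrightarrow> atoms_of Q A \<subset> atoms_of Q B"

definition free_dominant :: "'v cqap \<Rightarrow> bool" where
  "free_dominant Q \<longleftrightarrow> (\<forall>A \<in> qvars Q. \<forall>B \<in> qvars Q.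
      A \<in> free_vars Q \<and> dominates Q B A \<longrightarrow> B \<in> free_vars Q)"

definition input_dominant :: "'v cqap \<Rightarrow> bool" where
  "input_dominant Q \<longleftrightarrow> (\<forall>A \<in> qvars Q. \<forall>B \<in> qvars Q.
      A \<in> inp Q \<and> dominates Q B A \<longrightarrow> B \<in> inp Q)"

definition hierarchical :: "'v cqap \<Rightarrow> bool" where
  "hierarchical Q \<longleftrightarrow> (\<forall>A \<in> qvars Q. \<forall>B \<in> qvars Q.
      atoms_of Q A \<subseteq> atoms_of Q B \<or> atoms_of Q B \<subseteq> atoms_of Q A
      \<or> atoms_of Q A \<inter> atoms_of Q B = {})"

text \<open>After replacing every occurrence of an input variable by a distinct fresh variable,
  two atoms are adjacent in the hypergraph iff they share a non-input variable
  (fresh variables occur in exactly one atom).\<close>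

definition frac_adj :: "'v cqap \<Rightarrow> nat \<Rightarrow> nat \<Rightarrow> bool" where
  "frac_adj Q i j \<longleftrightarrow> i < length (atoms Q) \<and> j < length (atoms Q)
      \<and> (\<exists>v. v \<notin> inp Q \<and> v \<in> atoms Q ! i \<and> v \<in> atoms Q ! j)"

definition frac_comp :: "'v cqap \<Rightarrow> nat \<Rightarrow> nat set" where
  "frac_comp Q i = {j. (i, j) \<in> {(a, b). frac_adj Q a b}\<^sup>*}"

definition frac_rep :: "'v cqap \<Rightarrow> nat \<Rightarrow> nat" where
  "frac_rep Q i = (LEAST j. j \<in> frac_comp Q i)"

text \<open>Variables of the fracture: non-input variables v become (v, None); an input
  variable x occurring in the component named c becomes the fresh input variable (x, Some c).\<close>

definition frac_atom :: "'v cqap \<Rightarrow> nat \<Rightarrow> ('v \<times> nat option) set" where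
  "frac_atom Q i = (\<lambda>v. (v, None)) ` (atoms Q ! i - inp Q)
      \<union> (\<lambda>x. (x, Some (frac_rep Q i))) ` (atoms Q ! i \<inter> inp Q)"

definition fracture :: "'v cqap \<Rightarrow> ('v \<times> nat option) cqap" where
  "fracture Q = \<lparr> atoms = map (frac_atom Q) [0..<length (atoms Q)],
      inp = {(x, Some (frac_rep Q i)) | x i. i < length (atoms Q) \<and> x \<in> atoms Q ! i \<inter> inp Q},
      outp = (\<lambda>v. (v, None)) ` outp Q \<rparr>"

definition CQAP0 :: "'v cqap \<Rightarrow> bool" where
  "CQAP0 Q \<longleftrightarrow> hierarchical (fracture Q) \<and> free_dominant (fracture Q)
      \<and> input_dominant (fracture Q)"

text \<open>A variable order is a rooted forest on the variables, given by a parent map.\<close>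

type_synonym 'v vo = "'v \<Rightarrow> 'v option"

definition par_rel :: "'v vo \<Rightarrow> ('v \<times> 'v) set" where
  "par_rel \<omega> = {(x, y). \<omega> x = Some y}"

text \<open>anc \<omega> x y: y is a (strict) ancestor of x.\<close>
definition anc :: "'v vo \<Rightarrow> 'v \<Rightarrow> 'v \<Rightarrow> bool" where
  "anc \<omega> x y \<longleftrightarrow> (x, y) \<in> (par_rel \<omega>)\<^sup>+"

definition subtree :: "'v vo \<Rightarrow> 'v \<Rightarrow> 'v set" where
  "subtree \<omega> X = insert X {Z. anc \<omega> Z X}"

text \<open>The variables of each atom lie on a common root-to-leaf path, i.e. they are
  pairwise comparable w.r.t. the ancestor relation.\<close>
definition is_vo :: "'v cqap \<Rightarrow> 'v vo \<Rightarrow> bool" where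
  "is_vo Q \<omega> \<longleftrightarrow> (\<forall>x. x \<notin> qvars Q \<longrightarrow> \<omega> x = None)
      \<and> (\<forall>x y. \<omega> x = Some y \<longrightarrow> y \<in> qvars Q)
      \<and> (\<forall>x. \<not> anc \<omega> x x)
      \<and> (\<forall>A \<in> set (atoms Q). \<forall>x \<in> A. \<forall>y \<in> A. x = y \<or> anc \<omega> x y \<or> anc \<omega> y x)"

definition dep :: "'v cqap \<Rightarrow> 'v vo \<Rightarrow> 'v \<Rightarrow> 'v set" where
  "dep Q \<omega> X = {Y. anc \<omega> X Y \<and> (\<exists>A \<in> set (atoms Q). Y \<in> A \<and> (\<exists>Z \<in> subtree \<omega> X. Z \<in> A))}"

definition Svars :: "'v cqap \<Rightarrow> 'v vo \<Rightarrow> 'v \<Rightarrow> 'v set" where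
  "Svars Q \<omega> X = insert X (dep Q \<omega> X)"

text \<open>Leaves of an extended VO: atoms (by index) and indicator atoms
  Ind X i = the indicator atom I_Z R_i with Z = schema(R_i) \<inter> S_X added as a child of X.\<close>

datatype 'v leaf = Atm nat | Ind 'v nat

fun leaf_sch :: "'v cqap \<Rightarrow> 'v vo \<Rightarrow> 'v leaf \<Rightarrow> 'v set" where
  "leaf_sch Q \<omega> (Atm i) = atoms Q ! i"
| "leaf_sch Q \<omega> (Ind X i) = atoms Q ! i \<inter> Svars Q \<omega> X"

text \<open>Atom i is a child of its lowest variable X.\<close>
definition atom_at :: "'v cqap \<Rightarrow> 'v vo \<Rightarrow> nat \<Rightarrow> 'v \<Rightarrow> bool" where
  "atom_at Q \<omega> i X \<longleftrightarrow> i < length (atoms Q) \<and> X \<in> atoms Q ! i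
      \<and> (\<forall>Y \<in> atoms Q ! i. Y = X \<or> anc \<omega> X Y)"

text \<open>ind X: the indices i of the atoms whose indicator atoms are children of X.\<close>
definition leaves_below :: "'v cqap \<Rightarrow> 'v vo \<Rightarrow> ('v \<Rightarrow> nat set) \<Rightarrow> 'v \<Rightarrow> 'v leaf set" where
  "leaves_below Q \<omega> ind X = {Atm i | i. \<exists>Z \<in> subtree \<omega> X. atom_at Q \<omega> i Z}
      \<union> {Ind Z i | Z i. Z \<in> subtree \<omega> X \<and> i \<in> ind Z}"

text \<open>The set R of (atom and indicator) leaves below X at the time X is processed
  (bottom-up): everything in the subtree except the indicators of X itself.\<close>
definition R_below :: "'v cqap \<Rightarrow> 'v vo \<Rightarrow> ('v \<Rightarrow> nat set) \<Rightarrow> 'v \<Rightarrow> 'v leaf set" where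
  "R_below Q \<omega> ind X = {Atm i | i. \<exists>Z \<in> subtree \<omega> X. atom_at Q \<omega> i Z}
      \<union> {Ind Z i | Z i. anc \<omega> Z X \<and> i \<in> ind Z}"

definition candidates :: "'v cqap \<Rightarrow> 'v vo \<Rightarrow> ('v \<Rightarrow> nat set) \<Rightarrow> 'v \<Rightarrow> nat set" where
  "candidates Q \<omega> ind X = {i. i < length (atoms Q) \<and> Atm i \<notin> R_below Q \<omega> ind X
      \<and> atoms Q ! i \<inter> Svars Q \<omega> X \<noteq> {}}"

inductive gyo_step :: "('l \<Rightarrow> 'v set option) \<Rightarrow> ('l \<Rightarrow> 'v set option) \<Rightarrow> bool" where
  vdel: "H e = Some E \<Longrightarrow> v \<in> E \<Longrightarrow> (\<forall>e' E'. e' \<noteq> e \<longrightarrow> H e' = Some E' \<longrightarrow> v \<notin> E')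
          \<Longrightarrow> gyo_step H (H(e := Some (E - {v})))"
| edel: "H e = Some E \<Longrightarrow> H e' = Some E' \<Longrightarrow> e \<noteq> e' \<Longrightarrow> E \<subseteq> E'
          \<Longrightarrow> gyo_step H (H(e := None))"

definition gyo_fix :: "('l \<Rightarrow> 'v set option) \<Rightarrow> ('l \<Rightarrow> 'v set option) \<Rightarrow> bool" where
  "gyo_fix H H' \<longleftrightarrow> gyo_step\<^sup>*\<^sup>* H H' \<and> \<not> (\<exists>H''. gyo_step H' H'')"

definition gyo_hypergraph :: "'v cqap \<Rightarrow> 'v vo \<Rightarrow> ('v \<Rightarrow> nat set) \<Rightarrow> 'v \<Rightarrow> 'v leaf \<Rightarrow> 'v set option" where
  "gyo_hypergraph Q \<omega> ind X l =
     (if l \<in> R_below Q \<omega> ind X \<union> Ind X ` candidates Q \<omega> ind X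
      then Some (leaf_sch Q \<omega> l) else None)"

definition valid_ind :: "'v cqap \<Rightarrow> 'v vo \<Rightarrow> ('v \<Rightarrow> nat set) \<Rightarrow> bool" where
  "valid_ind Q \<omega> ind \<longleftrightarrow> (\<forall>X. X \<notin> qvars Q \<longrightarrow> ind X = {})
     \<and> (\<forall>X \<in> qvars Q. \<exists>H'. gyo_fix (gyo_hypergraph Q \<omega> ind X) H'
            \<and> ind X = {i \<in> candidates Q \<omega> ind X. H' (Ind X i) \<noteq> None})"

definition is_ext_vo :: "'v cqap \<Rightarrow> 'v vo \<Rightarrow> ('v \<Rightarrow> nat set) \<Rightarrow> bool" where
  "is_ext_vo Q \<omega> ind \<longleftrightarrow> is_vo Q \<omega> \<and> valid_ind Q \<omega> ind"

definition access_top :: "'v cqap \<Rightarrow> 'v vo \<Rightarrow> bool" where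
  "access_top Q \<omega> \<longleftrightarrow> (\<forall>x y. anc \<omega> x y \<longrightarrow>
      \<not> (y \<in> bound_vars Q \<and> x \<in> free_vars Q) \<and> \<not> (y \<in> outp Q \<and> x \<in> inp Q))"

definition rho_star :: "'l set \<Rightarrow> ('l \<Rightarrow> 'v set) \<Rightarrow> 'v set \<Rightarrow> real" where
  "rho_star E sch F = Inf {(\<Sum>e\<in>E. lam e) | lam.
      (\<forall>e\<in>E. 0 \<le> lam e \<and> lam e \<le> 1) \<and> (\<forall>Y\<in>F. (\<Sum>e\<in>{e\<in>E. Y \<in> sch e}. lam e) \<ge> 1)}"

definition static_w :: "'v cqap \<Rightarrow> 'v vo \<Rightarrow> ('v \<Rightarrow> nat set) \<Rightarrow> real" where
  "static_w Q \<omega> ind = Max ((\<lambda>X. rho_star (leaves_below Q \<omega> ind X) (leaf_sch Q \<omega>) (Svars Q \<omega> X))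
      ` qvars Q)"

definition dyn_delta :: "'v cqap \<Rightarrow> 'v vo \<Rightarrow> ('v \<Rightarrow> nat set) \<Rightarrow> real" where
  "dyn_delta Q \<omega> ind = Max ((\<lambda>(X, l). rho_star (leaves_below Q \<omega> ind X) (leaf_sch Q \<omega>)
        (Svars Q \<omega> X - leaf_sch Q \<omega> l))
      ` {(X, l). X \<in> qvars Q \<and> l \<in> leaves_below Q \<omega> ind X})"

definition width_pairs :: "'v cqap \<Rightarrow> (real \<times> real) set" where
  "width_pairs Q = {(dyn_delta (fracture Q) \<omega> ind, static_w (fracture Q) \<omega> ind) | \<omega> ind.
      is_ext_vo (fracture Q) \<omega> ind \<and> access_top (fracture Q) \<omega>}"

text \<open>(delta(Q), w(Q)): lexicographically smallest pair.\<close>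
definition cqap_delta :: "'v cqap \<Rightarrow> real" where
  "cqap_delta Q = Min (fst ` width_pairs Q)"

definition cqap_w :: "'v cqap \<Rightarrow> real" where
  "cqap_w Q = Min {w. (cqap_delta Q, w) \<in> width_pairs Q}"

end

theory Submission
  imports Defs "HOL-Library.Product_Lexorder"
begin

(*
  In the fracture, two variables that share an atom have comparable sets of atoms (hierarchy).
  Ordering the variables by strict inclusion of their atom sets, and breaking ties by putting
  inputs above outputs above bound variables, therefore yields a variable order; free- and
  input-dominance make it access-top.  In this order every atom placed below a variable X contains
  X together with all its ancestors.  Hence a single atom covers S_X (static width 1), S_X minus
  the schema of any leaf below X is empty (dynamic width 0), and each candidate indicator atom is
  contained in an atom hyperedge, so the GYO reduction deletes it and no indicator is added.
  Conversely every extended variable order has dynamic width at least 0 and, since X is in S_X,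
  static width at least 1.
*)

section \<open>Fractional edge covers\<close>

definition fractional_edge_covers :: "'l set \<Rightarrow> ('l \<Rightarrow> 'v set) \<Rightarrow> 'v set \<Rightarrow> ('l \<Rightarrow> real) set" where
  "fractional_edge_covers E sch F = {lam. (\<forall>e\<in>E. 0 \<le> lam e \<and> lam e \<le> 1)
      \<and> (\<forall>Y\<in>F. (\<Sum>e\<in>{e\<in>E. Y \<in> sch e}. lam e) \<ge> 1)}"

lemma rho_star_conv_covers:
  "rho_star E sch F = Inf ((\<lambda>lam. \<Sum>e\<in>E. lam e) ` fractional_edge_covers E sch F)"
  unfolding rho_star_def fractional_edge_covers_def by (simp add: setcompr_eq_image)

lemma rho_star_geI:
  assumes "fractional_edge_covers E sch F \<noteq> {}"
    and "\<And>lam. lam \<in> fractional_edge_covers E sch F \<Longrightarrow> c \<le> (\<Sum>e\<in>E. lam e)"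
  shows "c \<le> rho_star E sch F"
  unfolding rho_star_conv_covers using assms by (intro cInf_greatest) auto

lemma rho_star_eqI:
  assumes "lam0 \<in> fractional_edge_covers E sch F" and "(\<Sum>e\<in>E. lam0 e) = c"
    and "\<And>lam. lam \<in> fractional_edge_covers E sch F \<Longrightarrow> c \<le> (\<Sum>e\<in>E. lam e)"
  shows "rho_star E sch F = c"
  unfolding rho_star_conv_covers using assms by (intro cInf_eq_minimum) auto

lemma cover_weight_nonneg:
  "lam \<in> fractional_edge_covers E sch F \<Longrightarrow> 0 \<le> (\<Sum>e\<in>E. lam e)"
  unfolding fractional_edge_covers_def by (auto intro: sum_nonneg)

lemma cover_weight_ge_one:
  assumes "finite E" and lam: "lam \<in> fractional_edge_covers E sch F" and "Y \<in> F"
  shows "1 \<le> (\<Sum>e\<in>E. lam e)"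
proof -
  have "1 \<le> (\<Sum>e\<in>{e\<in>E. Y \<in> sch e}. lam e)"
    using lam \<open>Y \<in> F\<close> unfolding fractional_edge_covers_def by blast
  also have "\<dots> \<le> (\<Sum>e\<in>E. lam e)"
    using assms lam unfolding fractional_edge_covers_def by (intro sum_mono2) auto
  finally show ?thesis .
qed

lemma one_in_fractional_edge_covers:
  assumes "finite E" and "\<forall>Y\<in>F. \<exists>e\<in>E. Y \<in> sch e"
  shows "(\<lambda>_. 1) \<in> fractional_edge_covers E sch F"
  using assms unfolding fractional_edge_covers_def by (auto simp: Suc_le_eq card_gt_0_iff)

lemma rho_star_nonneg:
  assumes "finite E" and "\<forall>Y\<in>F. \<exists>e\<in>E. Y \<in> sch e"
  shows "0 \<le> rho_star E sch F"
  using one_in_fractional_edge_covers[OF assms] cover_weight_nonneg by (intro rho_star_geI) auto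

lemma rho_star_ge_one:
  assumes "finite E" and "\<forall>Y\<in>F. \<exists>e\<in>E. Y \<in> sch e" and "F \<noteq> {}"
  shows "1 \<le> rho_star E sch F"
proof (rule rho_star_geI)
  show "fractional_edge_covers E sch F \<noteq> {}"
    using one_in_fractional_edge_covers[OF assms(1,2)] by blast
  obtain Y where "Y \<in> F" using assms(3) by blast
  then show "1 \<le> (\<Sum>e\<in>E. lam e)" if "lam \<in> fractional_edge_covers E sch F" for lam
    using cover_weight_ge_one[OF assms(1) that] by blast
qed

lemma rho_star_empty: "rho_star E sch {} = 0"
  by (rule rho_star_eqI[of "\<lambda>_. 0"]) (auto simp: fractional_edge_covers_def intro: sum_nonneg)

lemma rho_star_single_edge:
  assumes "finite E" and "e0 \<in> E" and "F \<subseteq> sch e0" and "F \<noteq> {}"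
  shows "rho_star E sch F = 1"
proof (rule rho_star_eqI)
  let ?lam = "\<lambda>e. if e = e0 then 1 else 0 :: real"
  show "?lam \<in> fractional_edge_covers E sch F"
    using assms unfolding fractional_edge_covers_def by auto
  show "(\<Sum>e\<in>E. ?lam e) = 1"
    using assms by simp
  show "1 \<le> (\<Sum>e\<in>E. lam e)" if "lam \<in> fractional_edge_covers E sch F" for lam
    using assms cover_weight_ge_one[OF assms(1) that] by blast
qed

section \<open>GYO reduction\<close>

definition gyo_size :: "('l \<Rightarrow> 'v set option) \<Rightarrow> nat" where
  "gyo_size H = (\<Sum>l\<in>dom H. card (the (H l)) + 1)"

lemma gyo_step_decreases_size:
  assumes "gyo_step H H'" and "finite (dom H)" and "\<forall>E\<in>ran H. finite E"
  shows "dom H' \<subseteq> dom H \<and> (\<forall>E\<in>ran H'. finite E) \<and> gyo_size H' < gyo_size H"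
  using assms(1)
proof cases
  case (vdel e E v)
  have "finite E" using assms(3) vdel by (auto intro: ranI)
  then have "card (E - {v}) < card E" using vdel by (intro card_Diff1_less)
  moreover have "dom H' = dom H" using vdel by auto
  ultimately have "gyo_size H' < gyo_size H"
    unfolding gyo_size_def \<open>dom H' = dom H\<close> using vdel assms(2)
    by (intro sum_strict_mono_ex1) (auto intro!: bexI[of _ e])
  moreover have "\<forall>E\<in>ran H'. finite E"
    using assms(3) \<open>finite E\<close> vdel by (auto simp: ran_def)
  ultimately show ?thesis using \<open>dom H' = dom H\<close> by simp
next
  case (edel e E e' E')
  have "e \<in> dom H" using edel by auto
  have "dom H' = dom H - {e}" using edel by auto
  have "gyo_size H' = (\<Sum>l\<in>dom H - {e}. card (the (H l)) + 1)"
    unfolding gyo_size_def \<open>dom H' = dom H - {e}\<close> using edel by (intro sum.cong) auto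
  also have "\<dots> < gyo_size H"
    unfolding gyo_size_def sum.remove[OF assms(2) \<open>e \<in> dom H\<close>] by simp
  finally have "gyo_size H' < gyo_size H" .
  moreover have "\<forall>E\<in>ran H'. finite E"
    using assms(3) edel by (auto simp: ran_def)
  ultimately show ?thesis using \<open>dom H' = dom H - {e}\<close> by auto
qed

lemma gyo_fix_exists:
  "finite (dom H) \<Longrightarrow> \<forall>E\<in>ran H. finite E \<Longrightarrow> \<exists>H'. gyo_fix H H' \<and> dom H' \<subseteq> dom H"
proof (induction "gyo_size H" arbitrary: H rule: less_induct)
  case less
  show ?case
  proof (cases "\<exists>H2. gyo_step H H2")
    case False
    then have "gyo_fix H H" unfolding gyo_fix_def by simp
    then show ?thesis by blast
  next
    case True
    then obtain H2 where step: "gyo_step H H2" by blast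
    note H2 = gyo_step_decreases_size[OF step less.prems]
    moreover have "finite (dom H2)" using H2 less.prems(1) finite_subset by blast
    ultimately obtain H' where "gyo_fix H2 H'" "dom H' \<subseteq> dom H2"
      using less.hyps by blast
    then show ?thesis
      using step H2 unfolding gyo_fix_def by (meson converse_rtranclp_into_rtranclp order_trans)
  qed
qed

lemma gyo_delete_contained_edges:
  assumes "finite T" and "a \<notin> T" and "H a = Some A"
    and "\<forall>t\<in>T. \<exists>E. H t = Some E \<and> E \<subseteq> A"
  shows "gyo_step\<^sup>*\<^sup>* H (\<lambda>l. if l \<in> T then None else H l)"
  using assms
proof (induction T rule: finite_induct)
  case (insert t T)
  let ?HT = "\<lambda>l. if l \<in> T then None else H l"
  obtain E where E: "H t = Some E" "E \<subseteq> A" using insert.prems by auto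
  have "gyo_step\<^sup>*\<^sup>* H ?HT" using insert by simp
  moreover have "gyo_step ?HT (?HT(t := None))"
  proof (rule gyo_step.edel)
    show "?HT t = Some E" "?HT a = Some A" using E insert by simp_all
    show "t \<noteq> a" "E \<subseteq> A" using E insert by auto
  qed
  ultimately have "gyo_step\<^sup>*\<^sup>* H (?HT(t := None))" by (rule rtranclp.rtrancl_into_rtrancl[of gyo_step])
  also have "?HT(t := None) = (\<lambda>l. if l \<in> insert t T then None else H l)" by (rule ext) simp
  finally show ?case .
qed simp

section \<open>Variable orders\<close>

lemma finite_chain_has_least:
  assumes "finite S" and "S \<noteq> {}" and "trans r"
    and "\<forall>x\<in>S. \<forall>y\<in>S. x = y \<or> (x, y) \<in> r \<or> (y, x) \<in> r"
  shows "\<exists>p\<in>S. \<forall>z\<in>S. z = p \<or> (p, z) \<in> r"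
  using assms(1,2,4)
proof (induction S rule: finite_ne_induct)
  case (insert x S)
  then obtain p where p: "p \<in> S" "\<forall>z\<in>S. z = p \<or> (p, z) \<in> r" by auto
  then consider "x = p" | "(x, p) \<in> r" | "(p, x) \<in> r" using insert.prems by auto
  then show ?case
  proof cases
    case 2
    then have "\<forall>z\<in>insert x S. z = x \<or> (x, z) \<in> r"
      using p \<open>trans r\<close> by (auto dest: transD)
    then show ?thesis by blast
  qed (use p in auto)
qed simp

lemma anc_trans: "anc \<omega> x y \<Longrightarrow> anc \<omega> y z \<Longrightarrow> anc \<omega> x z"
  unfolding anc_def by (rule trancl_trans)

lemma in_qvars_iff_atom: "x \<in> qvars Q \<longleftrightarrow> (\<exists>i<length (atoms Q). x \<in> atoms Q ! i)"
  unfolding qvars_def by (fastforce simp: in_set_conv_nth)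

lemma finite_qvars: "\<forall>A\<in>set (atoms Q). finite A \<Longrightarrow> finite (qvars Q)"
  unfolding qvars_def by auto

lemma atom_at_exists:
  assumes fin: "\<forall>A\<in>set (atoms Q). finite A" and vo: "is_vo Q \<omega>"
    and i: "i < length (atoms Q)" and x: "x \<in> atoms Q ! i"
  shows "\<exists>W. atom_at Q \<omega> i W"
proof -
  have "atoms Q ! i \<in> set (atoms Q)" using i by simp
  then have "\<exists>p\<in>atoms Q ! i. \<forall>z\<in>atoms Q ! i. z = p \<or> (p, z) \<in> (par_rel \<omega>)\<^sup>+"
    using fin vo x unfolding is_vo_def anc_def
    by (intro finite_chain_has_least) (auto intro: trans_trancl)
  then show ?thesis using i unfolding atom_at_def anc_def by blast
qed

lemma Svars_covered_by_atom_below: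
  assumes fin: "\<forall>A\<in>set (atoms Q). finite A" and vo: "is_vo Q \<omega>"
    and X: "X \<in> qvars Q" and Y: "Y \<in> Svars Q \<omega> X"
  shows "\<exists>i Z. Z \<in> subtree \<omega> X \<and> atom_at Q \<omega> i Z \<and> Y \<in> atoms Q ! i"
proof -
  obtain i Z where i: "i < length (atoms Q)" "Y \<in> atoms Q ! i" "Z \<in> atoms Q ! i"
    and Z: "Z \<in> subtree \<omega> X"
  proof (cases "Y = X")
    case True
    then show ?thesis using X that unfolding in_qvars_iff_atom subtree_def by blast
  next
    case False
    then show ?thesis using Y that unfolding Svars_def dep_def by (auto simp: in_set_conv_nth)
  qed
  obtain W where W: "atom_at Q \<omega> i W" using atom_at_exists[OF fin vo i(1,2)] by blast
  then have "W \<in> subtree \<omega> X"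
    using i(3) Z unfolding atom_at_def subtree_def by (auto intro: anc_trans)
  then show ?thesis using W i(2) by blast
qed

lemma leaves_below_cover_Svars:
  assumes "\<forall>A\<in>set (atoms Q). finite A" and "is_vo Q \<omega>" and "X \<in> qvars Q"
  shows "\<forall>Y\<in>Svars Q \<omega> X. \<exists>l\<in>leaves_below Q \<omega> ind X. Y \<in> leaf_sch Q \<omega> l"
proof
  fix Y assume "Y \<in> Svars Q \<omega> X"
  then obtain i Z where "Z \<in> subtree \<omega> X" "atom_at Q \<omega> i Z" "Y \<in> atoms Q ! i"
    using Svars_covered_by_atom_below[OF assms] by blast
  then show "\<exists>l\<in>leaves_below Q \<omega> ind X. Y \<in> leaf_sch Q \<omega> l"
    by (intro bexI[of _ "Atm i"]) (auto simp: leaves_below_def)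
qed

lemma valid_ind_subset:
  assumes "valid_ind Q \<omega> ind"
  shows "ind X \<subseteq> {..<length (atoms Q)}" and "X \<notin> qvars Q \<Longrightarrow> ind X = {}"
  using assms unfolding valid_ind_def candidates_def by blast+

lemma finite_leaves_below:
  assumes fin: "\<forall>A\<in>set (atoms Q). finite A" and ind: "valid_ind Q \<omega> ind"
  shows "finite (leaves_below Q \<omega> ind X)"
proof (rule finite_subset)
  show "leaves_below Q \<omega> ind X \<subseteq> Atm ` {..<length (atoms Q)}
      \<union> case_prod Ind ` (qvars Q \<times> {..<length (atoms Q)})"
    using valid_ind_subset[OF ind] by (fastforce simp: leaves_below_def atom_at_def)
  show "finite (Atm ` {..<length (atoms Q)} \<union> case_prod Ind ` (qvars Q \<times> {..<length (atoms Q)}))"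
    using finite_qvars[OF fin] by simp
qed

lemma ext_vo_widths_lower_bound:
  assumes fin: "\<forall>A\<in>set (atoms Q). finite A" and ne: "qvars Q \<noteq> {}"
    and ext: "is_ext_vo Q \<omega> ind"
  shows "0 \<le> dyn_delta Q \<omega> ind \<and> 1 \<le> static_w Q \<omega> ind"
proof -
  have vo: "is_vo Q \<omega>" and ind: "valid_ind Q \<omega> ind" using ext unfolding is_ext_vo_def by auto
  obtain X where X: "X \<in> qvars Q" using ne by blast
  note leaves = finite_leaves_below[OF fin ind]
  note cover = leaves_below_cover_Svars[OF fin vo X, of ind]
  obtain l where l: "l \<in> leaves_below Q \<omega> ind X"
    using cover unfolding Svars_def by blast
  have "0 \<le> rho_star (leaves_below Q \<omega> ind X) (leaf_sch Q \<omega>) (Svars Q \<omega> X - leaf_sch Q \<omega> l)"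
    using cover by (intro rho_star_nonneg[OF leaves]) blast
  also have "\<dots> \<le> dyn_delta Q \<omega> ind"
  proof -
    have "{(X, l). X \<in> qvars Q \<and> l \<in> leaves_below Q \<omega> ind X} = Sigma (qvars Q) (leaves_below Q \<omega> ind)"
      by auto
    then show ?thesis
      unfolding dyn_delta_def using finite_qvars[OF fin] leaves X l by (intro Max_ge) auto
  qed
  finally have "0 \<le> dyn_delta Q \<omega> ind" .
  have "1 \<le> rho_star (leaves_below Q \<omega> ind X) (leaf_sch Q \<omega>) (Svars Q \<omega> X)"
    using cover by (intro rho_star_ge_one[OF leaves]) (auto simp: Svars_def)
  also have "\<dots> \<le> static_w Q \<omega> ind"
    unfolding static_w_def using finite_qvars[OF fin] X by (intro Max_ge) auto
  finally show ?thesis using \<open>0 \<le> dyn_delta Q \<omega> ind\<close> by simp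
qed

lemma finite_access_top_ext_vos:
  assumes fin: "\<forall>A\<in>set (atoms Q). finite A"
  shows "finite {(\<omega>, ind). is_ext_vo Q \<omega> ind \<and> access_top Q \<omega>}"
proof (rule finite_subset)
  let ?V = "qvars Q" and ?n = "length (atoms Q)"
  let ?VOs = "{\<omega>. \<forall>x. (x \<in> ?V \<longrightarrow> \<omega> x \<in> insert None (Some ` ?V)) \<and> (x \<notin> ?V \<longrightarrow> \<omega> x = None)}"
  let ?Inds = "{ind. \<forall>x. (x \<in> ?V \<longrightarrow> ind x \<in> Pow {..<?n}) \<and> (x \<notin> ?V \<longrightarrow> ind x = {})}"
  show "{(\<omega>, ind). is_ext_vo Q \<omega> ind \<and> access_top Q \<omega>} \<subseteq> ?VOs \<times> ?Inds"
  proof clarify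
    fix \<omega> ind assume "is_ext_vo Q \<omega> ind"
    then have "is_vo Q \<omega>" and ind: "valid_ind Q \<omega> ind" unfolding is_ext_vo_def by auto
    then have "\<omega> x \<in> insert None (Some ` ?V)" for x
      unfolding is_vo_def by (cases "\<omega> x") auto
    then show "\<omega> \<in> ?VOs \<and> ind \<in> ?Inds"
      using \<open>is_vo Q \<omega>\<close> valid_ind_subset[OF ind] unfolding is_vo_def by auto
  qed
  show "finite (?VOs \<times> ?Inds)"
    using finite_qvars[OF fin] by (intro finite_cartesian_product finite_set_of_finite_funs) auto
qed

definition Svars_in_atoms_below :: "'v cqap \<Rightarrow> 'v vo \<Rightarrow> bool" where
  "Svars_in_atoms_below Q \<omega> \<longleftrightarrow>
     (\<forall>X Z i. Z \<in> subtree \<omega> X \<longrightarrow> atom_at Q \<omega> i Z \<longrightarrow> Svars Q \<omega> X \<subseteq> atoms Q ! i)"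

lemma leaves_below_no_indicators:
  "leaves_below Q \<omega> (\<lambda>_. {}) X = {Atm i | i. \<exists>Z\<in>subtree \<omega> X. atom_at Q \<omega> i Z}"
  unfolding leaves_below_def by auto

lemma R_below_no_indicators:
  "R_below Q \<omega> (\<lambda>_. {}) X = {Atm i | i. \<exists>Z\<in>subtree \<omega> X. atom_at Q \<omega> i Z}"
  unfolding R_below_def by auto

lemma gyo_hypergraph_Ind:
  "i \<in> candidates Q \<omega> (\<lambda>_. {}) X \<Longrightarrow>
     gyo_hypergraph Q \<omega> (\<lambda>_. {}) X (Ind X i) = Some (atoms Q ! i \<inter> Svars Q \<omega> X)"
  unfolding gyo_hypergraph_def by simp

lemma dom_gyo_hypergraph_no_indicators:
  "dom (gyo_hypergraph Q \<omega> (\<lambda>_. {}) X)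
     \<subseteq> Atm ` {..<length (atoms Q)} \<union> Ind X ` candidates Q \<omega> (\<lambda>_. {}) X"
  unfolding gyo_hypergraph_def R_below_no_indicators atom_at_def by (auto split: if_splits)

lemma ran_gyo_hypergraph_finite:
  assumes fin: "\<forall>A\<in>set (atoms Q). finite A"
  shows "\<forall>E\<in>ran (gyo_hypergraph Q \<omega> (\<lambda>_. {}) X). finite E"
proof
  fix E assume "E \<in> ran (gyo_hypergraph Q \<omega> (\<lambda>_. {}) X)"
  then obtain l where l: "gyo_hypergraph Q \<omega> (\<lambda>_. {}) X l = Some E" by (auto simp: ran_def)
  then obtain i where "i < length (atoms Q)" "E \<subseteq> atoms Q ! i"
    unfolding gyo_hypergraph_def R_below_no_indicators atom_at_def candidates_def
    by (cases l) (auto split: if_splits)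
  then show "finite E" using fin by (auto intro: finite_subset)
qed

context
  fixes Q :: "'v cqap" and \<omega> :: "'v vo"
  assumes fin: "\<forall>A\<in>set (atoms Q). finite A" and vo: "is_vo Q \<omega>"
    and Svars_below: "Svars_in_atoms_below Q \<omega>"
begin

lemma atom_containing_Svars:
  assumes "X \<in> qvars Q"
  obtains a where "Atm a \<in> R_below Q \<omega> (\<lambda>_. {}) X" and "Svars Q \<omega> X \<subseteq> atoms Q ! a"
proof -
  obtain a Z where "Z \<in> subtree \<omega> X" "atom_at Q \<omega> a Z"
    using Svars_covered_by_atom_below[OF fin vo assms, of X] by (auto simp: Svars_def)
  then show ?thesis
    using that Svars_below unfolding R_below_no_indicators Svars_in_atoms_below_def by blast
qed

lemma valid_ind_no_indicators: "valid_ind Q \<omega> (\<lambda>_. {})"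
  unfolding valid_ind_def
proof (intro conjI allI impI ballI)
  fix X assume X: "X \<in> qvars Q"
  let ?H = "gyo_hypergraph Q \<omega> (\<lambda>_. {}) X"
  let ?C = "candidates Q \<omega> (\<lambda>_. {}) X"
  let ?HT = "\<lambda>l. if l \<in> Ind X ` ?C then None else ?H l"
  obtain a where a: "Atm a \<in> R_below Q \<omega> (\<lambda>_. {}) X" "Svars Q \<omega> X \<subseteq> atoms Q ! a"
    using atom_containing_Svars[OF X] .
  have "finite ?C" by (rule finite_subset[of _ "{..<length (atoms Q)}"]) (auto simp: candidates_def)
  then have "finite (dom ?H)"
    by (intro finite_subset[OF dom_gyo_hypergraph_no_indicators]) simp
  \<comment> \<open>every candidate indicator lies inside the hyperedge of atom a\<close>
  have "gyo_step\<^sup>*\<^sup>* ?H ?HT"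
  proof (rule gyo_delete_contained_edges)
    show "?H (Atm a) = Some (atoms Q ! a)" using a(1) unfolding gyo_hypergraph_def by simp
    show "\<forall>t\<in>Ind X ` ?C. \<exists>E. ?H t = Some E \<and> E \<subseteq> atoms Q ! a"
      using a(2) gyo_hypergraph_Ind[of _ Q \<omega> X] by blast
    show "finite (Ind X ` ?C)" using \<open>finite ?C\<close> by simp
    show "Atm a \<notin> Ind X ` ?C" by blast
  qed
  moreover obtain H' where "gyo_fix ?HT H'" and "dom H' \<subseteq> dom ?HT"
  proof -
    have "finite (dom ?HT)"
      using \<open>finite (dom ?H)\<close> by (rule finite_subset[rotated]) (auto split: if_splits)
    have "ran ?HT \<subseteq> ran ?H" by (auto simp: ran_def split: if_splits)
    then have "\<forall>E\<in>ran ?HT. finite E" using ran_gyo_hypergraph_finite[OF fin, of \<omega> X] by blast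
    with \<open>finite (dom ?HT)\<close> show ?thesis using that gyo_fix_exists by blast
  qed
  ultimately have "gyo_fix ?H H'" using rtranclp_trans[of gyo_step] unfolding gyo_fix_def by blast
  moreover have "H' (Ind X i) = None" if "i \<in> ?C" for i
  proof -
    have "?HT (Ind X i) = None" using that by simp
    then show ?thesis using \<open>dom H' \<subseteq> dom ?HT\<close> by (auto simp only: domIff subset_iff)
  qed
  ultimately show "\<exists>H'. gyo_fix ?H H' \<and> {} = {i \<in> ?C. H' (Ind X i) \<noteq> None}"
    by (intro exI[of _ H']) auto
qed simp

lemma static_w_no_indicators:
  assumes "qvars Q \<noteq> {}"
  shows "static_w Q \<omega> (\<lambda>_. {}) = 1"
proof -
  have "rho_star (leaves_below Q \<omega> (\<lambda>_. {}) X) (leaf_sch Q \<omega>) (Svars Q \<omega> X) = 1"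
    if X: "X \<in> qvars Q" for X
  proof -
    obtain a where "Atm a \<in> R_below Q \<omega> (\<lambda>_. {}) X" "Svars Q \<omega> X \<subseteq> atoms Q ! a"
      using atom_containing_Svars[OF X] .
    then show ?thesis
      using finite_leaves_below[OF fin valid_ind_no_indicators]
      by (intro rho_star_single_edge[of _ "Atm a"])
         (auto simp: leaves_below_no_indicators R_below_no_indicators Svars_def)
  qed
  then show ?thesis
    unfolding static_w_def using assms by (simp cong: image_cong add: image_constant_conv)
qed

lemma dyn_delta_no_indicators:
  assumes "qvars Q \<noteq> {}"
  shows "dyn_delta Q \<omega> (\<lambda>_. {}) = 0"
proof -
  let ?pairs = "{(X, l). X \<in> qvars Q \<and> l \<in> leaves_below Q \<omega> (\<lambda>_. {}) X}"
  have rho_zero: "rho_star (leaves_below Q \<omega> (\<lambda>_. {}) X) (leaf_sch Q \<omega>)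
      (Svars Q \<omega> X - leaf_sch Q \<omega> l) = 0" if l: "l \<in> leaves_below Q \<omega> (\<lambda>_. {}) X" for X l
  proof -
    obtain i Z where "l = Atm i" "Z \<in> subtree \<omega> X" "atom_at Q \<omega> i Z"
      using l unfolding leaves_below_no_indicators by blast
    then have "Svars Q \<omega> X - leaf_sch Q \<omega> l = {}"
      using Svars_below unfolding Svars_in_atoms_below_def by simp
    then show ?thesis by (simp only: rho_star_empty)
  qed
  obtain X where X: "X \<in> qvars Q" using assms by blast
  then obtain a where "Atm a \<in> R_below Q \<omega> (\<lambda>_. {}) X"
    using atom_containing_Svars by blast
  then have "(X, Atm a) \<in> ?pairs"
    using X unfolding leaves_below_no_indicators R_below_no_indicators by simp
  have "dyn_delta Q \<omega> (\<lambda>_. {}) = Max ((\<lambda>_. 0) ` ?pairs)"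
    unfolding dyn_delta_def using rho_zero by (intro arg_cong[of _ _ Max] image_cong) auto
  also have "\<dots> = 0"
    using image_constant[OF \<open>(X, Atm a) \<in> ?pairs\<close>, where c = "0 :: real"] by simp
  finally show ?thesis .
qed

end

definition cover_map :: "('a \<times> 'a) set \<Rightarrow> 'a vo" where
  "cover_map r x = (if \<exists>y. (x, y) \<in> r
     then Some (SOME p. (x, p) \<in> r \<and> (\<forall>z. (x, z) \<in> r \<longrightarrow> z = p \<or> (p, z) \<in> r)) else None)"

context
  fixes r :: "('a \<times> 'a) set"
  assumes fin: "finite r" and trans: "trans r" and irrefl: "irrefl r"
    and up_chains: "\<And>x y z. (x, y) \<in> r \<Longrightarrow> (x, z) \<in> r \<Longrightarrow> y = z \<or> (y, z) \<in> r \<or> (z, y) \<in> r"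
begin

lemma cover_map_SomeD:
  assumes "cover_map r x = Some p"
  shows "(x, p) \<in> r" and "\<And>z. (x, z) \<in> r \<Longrightarrow> z = p \<or> (p, z) \<in> r"
proof -
  obtain y where "(x, y) \<in> r" using assms unfolding cover_map_def by (auto split: if_splits)
  have "finite (r `` {x})" using fin by simp
  then have "\<exists>p\<in>r `` {x}. \<forall>z\<in>r `` {x}. z = p \<or> (p, z) \<in> r"
    using \<open>(x, y) \<in> r\<close> up_chains trans by (intro finite_chain_has_least) auto
  then have "\<exists>p. (x, p) \<in> r \<and> (\<forall>z. (x, z) \<in> r \<longrightarrow> z = p \<or> (p, z) \<in> r)" by blast
  from someI_ex[OF this] assms
  show "(x, p) \<in> r" and "\<And>z. (x, z) \<in> r \<Longrightarrow> z = p \<or> (p, z) \<in> r"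
    unfolding cover_map_def by (auto split: if_splits)
qed

lemma anc_cover_map_iff: "anc (cover_map r) x y \<longleftrightarrow> (x, y) \<in> r"
proof
  assume "anc (cover_map r) x y"
  moreover have "par_rel (cover_map r) \<subseteq> r"
    unfolding par_rel_def using cover_map_SomeD(1) by auto
  ultimately show "(x, y) \<in> r"
    unfolding anc_def using trans by (metis trancl_id trancl_mono)
next
  have "acyclic r" unfolding acyclic_irrefl trancl_id[OF trans] by (rule irrefl)
  with fin have "wf (r\<inverse>)" by (rule finite_acyclic_wf_converse)
  then show "(x, y) \<in> r \<Longrightarrow> anc (cover_map r) x y"
  proof (induction x rule: wf_induct_rule)
    case (less x)
    have "cover_map r x \<noteq> None" using less.prems unfolding cover_map_def by auto
    then obtain p where p: "cover_map r x = Some p" by blast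
    then have "(x, p) \<in> par_rel (cover_map r)" unfolding par_rel_def by simp
    moreover have "y = p \<or> (p, y) \<in> r" using cover_map_SomeD(2)[OF p less.prems] .
    ultimately show ?case
      using less.IH cover_map_SomeD(1)[OF p] unfolding anc_def by (auto intro: trancl_into_trancl2)
  qed
qed

end

section \<open>The canonical variable order of a hierarchical dominant query\<close>

locale hierarchical_dominant_query =
  fixes P :: "'w cqap" and num :: "'w \<Rightarrow> nat"
  assumes finite_qvars: "finite (qvars P)" and hier: "hierarchical P"
    and free_dom: "free_dominant P" and input_dom: "input_dominant P"
    and inp_outp_disjoint: "inp P \<inter> outp P = {}" and inj_num: "inj_on num (qvars P)"
begin

definition kind :: "'w \<Rightarrow> nat" where
  "kind z = (if z \<in> inp P then 0 else if z \<in> outp P then 1 else 2)"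

text \<open>(x, y) \<in> higher means that y is to become a strict ancestor of x.\<close>
definition higher :: "('w \<times> 'w) set" where
  "higher = {(x, y). x \<in> qvars P \<and> y \<in> qvars P \<and> (atoms_of P x \<subset> atoms_of P y
      \<or> atoms_of P x = atoms_of P y \<and> (kind y, num y) < (kind x, num x))}"

lemma higher_atoms_of_subset: "(x, y) \<in> higher \<Longrightarrow> atoms_of P x \<subseteq> atoms_of P y"
  unfolding higher_def by auto

lemma atoms_of_nonempty: "x \<in> qvars P \<Longrightarrow> atoms_of P x \<noteq> {}"
  unfolding atoms_of_def in_qvars_iff_atom by blast

lemma higher_total:
  assumes x: "x \<in> qvars P" and y: "y \<in> qvars P" and "x \<noteq> y"
    and "atoms_of P x \<inter> atoms_of P y \<noteq> {}"
  shows "(x, y) \<in> higher \<or> (y, x) \<in> higher"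
proof -
  have "atoms_of P x \<subseteq> atoms_of P y \<or> atoms_of P y \<subseteq> atoms_of P x"
    using hier assms unfolding hierarchical_def by blast
  then consider "atoms_of P x \<subset> atoms_of P y" | "atoms_of P y \<subset> atoms_of P x"
    | "atoms_of P x = atoms_of P y" by blast
  then show ?thesis
  proof cases
    case 3
    have "num x \<noteq> num y" using inj_num x y \<open>x \<noteq> y\<close> by (meson inj_onD)
    then have "(kind x, num x) \<noteq> (kind y, num y)" by simp
    then have "(kind x, num x) < (kind y, num y) \<or> (kind y, num y) < (kind x, num x)"
      by (rule neq_iff[THEN iffD1])
    then show ?thesis using x y 3 unfolding higher_def by blast
  qed (use x y in \<open>auto simp: higher_def\<close>)
qed

lemma finite_higher: "finite higher"
  by (rule finite_subset[of _ "qvars P \<times> qvars P"]) (auto simp: higher_def finite_qvars)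

lemma trans_higher: "trans higher"
  unfolding higher_def by (rule transI) auto

lemma irrefl_higher: "irrefl higher"
  unfolding higher_def irrefl_def by auto

lemma higher_up_chains:
  assumes "(x, y) \<in> higher" and "(x, z) \<in> higher"
  shows "y = z \<or> (y, z) \<in> higher \<or> (z, y) \<in> higher"
proof -
  have "x \<in> qvars P" "y \<in> qvars P" "z \<in> qvars P" using assms unfolding higher_def by auto
  moreover have "atoms_of P x \<subseteq> atoms_of P y \<inter> atoms_of P z"
    using assms by (auto dest: higher_atoms_of_subset)
  ultimately show ?thesis using atoms_of_nonempty higher_total by blast
qed

definition canonical_vo :: "'w vo" where
  "canonical_vo = cover_map higher"

lemma anc_canonical_vo_iff: "anc canonical_vo x y \<longleftrightarrow> (x, y) \<in> higher"
  unfolding canonical_vo_def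
  using finite_higher trans_higher irrefl_higher higher_up_chains by (rule anc_cover_map_iff)

lemma is_vo_canonical_vo: "is_vo P canonical_vo"
  unfolding is_vo_def
proof (intro conjI allI impI ballI)
  show "canonical_vo x = None" if "x \<notin> qvars P" for x
    using that unfolding canonical_vo_def cover_map_def higher_def by auto
  show "y \<in> qvars P" if "canonical_vo x = Some y" for x y
  proof -
    have "anc canonical_vo x y" using that unfolding anc_def par_rel_def by auto
    then show ?thesis unfolding anc_canonical_vo_iff higher_def by blast
  qed
  show "\<not> anc canonical_vo x x" for x
    using irrefl_higher unfolding anc_canonical_vo_iff irrefl_def by blast
  fix A x y assume A: "A \<in> set (atoms P)" and "x \<in> A" "y \<in> A"
  then have "x \<in> qvars P" "y \<in> qvars P" unfolding qvars_def by auto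
  obtain i where "i < length (atoms P)" "atoms P ! i = A" using A by (auto simp: in_set_conv_nth)
  then have "i \<in> atoms_of P x \<inter> atoms_of P y"
    using \<open>x \<in> A\<close> \<open>y \<in> A\<close> unfolding atoms_of_def by auto
  then show "x = y \<or> anc canonical_vo x y \<or> anc canonical_vo y x"
    unfolding anc_canonical_vo_iff using higher_total \<open>x \<in> qvars P\<close> \<open>y \<in> qvars P\<close> by blast
qed

text \<open>Across a strict inclusion of atom sets this is dominance; for equal atom sets it is the
  tie-break by kind.\<close>
lemma higher_preserves_free_and_input:
  assumes "(x, y) \<in> higher"
  shows "(x \<in> free_vars P \<longrightarrow> y \<in> free_vars P) \<and> (x \<in> inp P \<longrightarrow> y \<in> inp P)"
proof (cases "atoms_of P x \<subset> atoms_of P y")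
  case True
  then have "dominates P y x" unfolding dominates_def .
  moreover have "x \<in> qvars P" "y \<in> qvars P" using assms unfolding higher_def by auto
  ultimately show ?thesis
    using free_dom input_dom unfolding free_dominant_def input_dominant_def by blast
next
  case False
  then have "kind y \<le> kind x" using assms unfolding higher_def by auto
  then show ?thesis unfolding kind_def free_vars_def by (auto split: if_splits)
qed

lemma access_top_canonical_vo: "access_top P canonical_vo"
  unfolding access_top_def anc_canonical_vo_iff bound_vars_def
  using higher_preserves_free_and_input inp_outp_disjoint by blast

lemma Svars_in_atoms_below_canonical_vo: "Svars_in_atoms_below P canonical_vo"
  unfolding Svars_in_atoms_below_def
proof (intro allI impI subsetI)
  fix X Z i Y
  assume "Z \<in> subtree canonical_vo X" "atom_at P canonical_vo i Z" "Y \<in> Svars P canonical_vo X"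
  then have "Z = X \<or> (Z, X) \<in> higher" "i \<in> atoms_of P Z" "Y = X \<or> (X, Y) \<in> higher"
    unfolding subtree_def Svars_def dep_def atom_at_def atoms_of_def anc_canonical_vo_iff by auto
  moreover have "atoms_of P Z \<subseteq> atoms_of P Y"
    using calculation(1,3) by (elim disjE) (auto dest: higher_atoms_of_subset)
  ultimately show "Y \<in> atoms P ! i" unfolding atoms_of_def by blast
qed

end

lemma finite_atoms_fracture:
  "wf_cqap Q \<Longrightarrow> \<forall>A\<in>set (atoms (fracture Q)). finite A"
  unfolding wf_cqap_def fracture_def frac_atom_def by auto

lemma qvars_fracture_nonempty:
  assumes "qvars Q \<noteq> {}"
  shows "qvars (fracture Q) \<noteq> {}"
proof -
  obtain v where "v \<in> qvars Q" using assms by blast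
  then obtain i where "i < length (atoms Q)" "v \<in> atoms Q ! i"
    unfolding in_qvars_iff_atom by blast
  moreover have "frac_atom Q i \<noteq> {}" if "v \<in> atoms Q ! i"
    using that unfolding frac_atom_def by (cases "v \<in> inp Q") auto
  ultimately show ?thesis unfolding qvars_def fracture_def by force
qed

lemma inp_outp_fracture_disjoint: "inp (fracture Q) \<inter> outp (fracture Q) = {}"
  unfolding fracture_def by auto

lemma finite_width_pairs:
  "wf_cqap Q \<Longrightarrow> finite (width_pairs Q)"
proof -
  assume "wf_cqap Q"
  have "width_pairs Q = (\<lambda>(\<omega>, ind). (dyn_delta (fracture Q) \<omega> ind, static_w (fracture Q) \<omega> ind))
      ` {(\<omega>, ind). is_ext_vo (fracture Q) \<omega> ind \<and> access_top (fracture Q) \<omega>}"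
    unfolding width_pairs_def by auto
  then show ?thesis
    using finite_access_top_ext_vos[OF finite_atoms_fracture[OF \<open>wf_cqap Q\<close>]] by simp
qed

lemma width_pairs_lower_bound:
  assumes "wf_cqap Q" and "qvars Q \<noteq> {}" and "(d, w) \<in> width_pairs Q"
  shows "0 \<le> d \<and> 1 \<le> w"
  using assms(3) ext_vo_widths_lower_bound[OF finite_atoms_fracture[OF assms(1)]
      qvars_fracture_nonempty[OF assms(2)]]
  unfolding width_pairs_def by auto

lemma zero_one_in_width_pairs:
  assumes "wf_cqap Q" and "CQAP0 Q" and "qvars Q \<noteq> {}"
  shows "(0, 1) \<in> width_pairs Q"
proof -
  let ?P = "fracture Q"
  note fin = finite_atoms_fracture[OF assms(1)]
  obtain num :: "_ \<Rightarrow> nat" where "inj_on num (qvars ?P)"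
    using finite_imp_inj_to_nat_seg[OF finite_qvars[OF fin]] by blast
  then interpret hierarchical_dominant_query ?P num
    using assms(2) finite_qvars[OF fin] inp_outp_fracture_disjoint
    by unfold_locales (auto simp: CQAP0_def)
  note canonical = fin is_vo_canonical_vo Svars_in_atoms_below_canonical_vo
  have "is_ext_vo ?P canonical_vo (\<lambda>_. {})"
    unfolding is_ext_vo_def using is_vo_canonical_vo valid_ind_no_indicators[OF canonical] by blast
  then show ?thesis
    using access_top_canonical_vo qvars_fracture_nonempty[OF assms(3)]
      dyn_delta_no_indicators[OF canonical] static_w_no_indicators[OF canonical]
    unfolding width_pairs_def by fastforce
qed

lemma lex_min_of_least_pair:
  fixes W :: "('a::linorder \<times> 'b::linorder) set"
  assumes "finite W" and "(a, b) \<in> W" and "\<And>d w. (d, w) \<in> W \<Longrightarrow> a \<le> d \<and> b \<le> w"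
  shows "Min (fst ` W) = a" and "Min {w. (a, w) \<in> W} = b"
proof -
  show "Min (fst ` W) = a"
    using assms by (intro Min_eqI) force+
  have "{w. (a, w) \<in> W} \<subseteq> snd ` W" by force
  then show "Min {w. (a, w) \<in> W} = b"
    using assms by (intro Min_eqI) (auto intro: finite_subset)
qed

theorem proposition9p2:
  fixes Q :: "'v cqap"
  assumes "wf_cqap Q" and "CQAP0 Q" and "qvars Q \<noteq> {}"
  shows "cqap_delta Q = 0 \<and> cqap_w Q = 1"
proof -
  note widths = finite_width_pairs[OF assms(1)] zero_one_in_width_pairs[OF assms]
    width_pairs_lower_bound[OF assms(1,3)]
  have "cqap_delta Q = 0"
    unfolding cqap_delta_def by (rule lex_min_of_least_pair(1)[OF widths])
  moreover have "cqap_w Q = 1"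
    unfolding cqap_w_def \<open>cqap_delta Q = 0\<close> by (rule lex_min_of_least_pair(2)[OF widths])
  ultimately show ?thesis ..
qed

end
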